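(* Let $0<\alpha<\beta<\infty$, $\mathcal{F}\subset\mathcal{F}_B^{[\alpha,\beta]}$ star-shaped with $L_2$-diameter $d$, $N\in\mathbb{N}$, and define $\tau^*:=\sup\{\tau:N\tau^2\le\log\mathcal{M}^{\mathrm{loc}}_{\mathcal{F}}(\tau,c)\}$, where $c$ is a sufficiently large absolute constant. If $\epsilon<k/N$ for a constant $k>7$, then $$\max\{\tau^{*2}\wedge d^2,\ \epsilon\wedge d^2\}\asymp\tau^{*2}\wedge d^2$$ (equality up to constant factors).
   Context: $B\subseteq\mathbb{R}^p$ compact Borel with positive measure, $\mu$ a probability measure on $B$; $\mathcal{F}_B^{[\alpha,\beta]}$ the measurable $f:B\to[\alpha,\beta]$ with $\int_Bf\,d\mu=1$, $\|f-g\|_2=(\int_B(f-g)^2d\mu)^{1/2}$, $B_2(g,r)$ the closed $L_2$-ball; $\mathcal{F}$ star-shaped (some $f_0\in\mathcal{F}$ with $tf+(1-t)f_0\in\mathcal{F}$ for $f\in\mathcal{F},t\in[0,1]$). $\mathcal{M}(\eta,S)$ is the maximal cardinality of a subset of $S$ with pairwise $L_2$ distances $>\eta$, and $\mathcal{M}^{\mathrm{loc}}_{\mathcal{F}}(\tau,c)=\sup_{g\in\mathcal{F}}\mathcal{M}(\tau/c,\mathcal{F}\cap B_2(g,\tau))$. $a\asymp b$ means $a\lesssim b$ and $b\lesssim a$ with constants independent of $N,\epsilon$. *)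

theory Defs
  imports "HOL-Probability.Probability"
begin

definition dens_class :: "'a set \<Rightarrow> 'a measure \<Rightarrow> real \<Rightarrow> real \<Rightarrow> ('a \<Rightarrow> real) set" where
  "dens_class B \<mu> \<alpha> \<beta> = {f. f \<in> borel_measurable \<mu> \<and> (\<forall>x\<in>B. \<alpha> \<le> f x \<and> f x \<le> \<beta>)
                              \<and> (\<integral>x. f x \<partial>\<mu>) = 1}"

definition L2dist :: "'a measure \<Rightarrow> ('a \<Rightarrow> real) \<Rightarrow> ('a \<Rightarrow> real) \<Rightarrow> real" where
  "L2dist \<mu> f g = sqrt (\<integral>x. (f x - g x)^2 \<partial>\<mu>)"

definition L2ball :: "'a measure \<Rightarrow> ('a \<Rightarrow> real) \<Rightarrow> real \<Rightarrow> ('a \<Rightarrow> real) set" where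
  "L2ball \<mu> g r = {f. L2dist \<mu> f g \<le> r}"

definition L2diam :: "'a measure \<Rightarrow> ('a \<Rightarrow> real) set \<Rightarrow> real" where
  "L2diam \<mu> F = Sup {L2dist \<mu> f g | f g. f \<in> F \<and> g \<in> F}"

definition star_shaped_fun :: "('a \<Rightarrow> real) set \<Rightarrow> bool" where
  "star_shaped_fun F \<longleftrightarrow> (\<exists>f0\<in>F. \<forall>f\<in>F. \<forall>t::real. 0 \<le> t \<and> t \<le> 1 \<longrightarrow>
                              (\<lambda>x. t * f x + (1 - t) * f0 x) \<in> F)"

definition packing_number :: "'a measure \<Rightarrow> real \<Rightarrow> ('a \<Rightarrow> real) set \<Rightarrow> ereal" where
  "packing_number \<mu> \<eta> S = Sup {ereal (real (card P)) | P. finite P \<and> P \<subseteq> S \<and>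
        (\<forall>f\<in>P. \<forall>g\<in>P. f \<noteq> g \<longrightarrow> L2dist \<mu> f g > \<eta>)}"

definition loc_packing :: "'a measure \<Rightarrow> ('a \<Rightarrow> real) set \<Rightarrow> real \<Rightarrow> real \<Rightarrow> ereal" where
  "loc_packing \<mu> F \<tau> c = (SUP g\<in>F. packing_number \<mu> (\<tau> / c) (F \<inter> L2ball \<mu> g \<tau>))"

definition ln_ereal :: "ereal \<Rightarrow> ereal" where
  "ln_ereal x = (if x = \<infinity> then \<infinity> else if x > 0 then ereal (ln (real_of_ereal x)) else -\<infinity>)"

definition tau_star :: "'a measure \<Rightarrow> ('a \<Rightarrow> real) set \<Rightarrow> nat \<Rightarrow> real \<Rightarrow> real" where
  "tau_star \<mu> F N c = Sup {\<tau>. 0 \<le> \<tau> \<and> ereal (real N * \<tau>^2) \<le> ln_ereal (loc_packing \<mu> F \<tau> c)}"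

end

theory Submission imports Defs begin

text \<open>Only the lower bound
  \<open>min (ln 2 / N) (d\<^sup>2 / 16) \<le> \<tau>*\<^sup>2\<close> has content; the rest is arithmetic with
  \<open>\<epsilon> < k / N\<close>. Pick \<open>h \<in> F\<close> at distance \<open>r > d / 4\<close> from the star centre \<open>f\<^sub>0\<close>
  (from \<open>\<parallel>f - g\<parallel>\<^sup>2 \<le> 2\<parallel>f - f\<^sub>0\<parallel>\<^sup>2 + 2\<parallel>g - f\<^sub>0\<parallel>\<^sup>2\<close>). For
  \<open>\<tau> = min (sqrt (ln 2 / N)) r\<close> the segment from \<open>f\<^sub>0\<close> to \<open>h\<close> contains a point at
  distance exactly \<open>\<tau>\<close> from \<open>f\<^sub>0\<close>, so the local packing number at scale \<open>\<tau>\<close> is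
  at least 2 as soon as \<open>c > 1\<close>, and \<open>N \<tau>\<^sup>2 \<le> ln 2\<close> makes \<open>\<tau>\<close> admissible in the
  supremum defining \<open>\<tau>*\<close>. The theorem holds with \<open>c\<^sub>0 = 2\<close> and
  \<open>C = k / ln 2 + 16\<close>.\<close>

lemma L2dist_nonneg: "0 \<le> L2dist \<mu> f g"
  unfolding L2dist_def by (simp add: integral_nonneg_AE)

lemma L2dist_self [simp]: "L2dist \<mu> f f = 0"
  unfolding L2dist_def by simp

lemma L2dist_commute: "L2dist \<mu> f g = L2dist \<mu> g f"
  unfolding L2dist_def by (simp add: power2_commute)

lemma L2dist_segment:
  "L2dist \<mu> (\<lambda>x. s * f x + (1 - s) * f0 x) f0 = \<bar>s\<bar> * L2dist \<mu> f f0"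
proof -
  have "(\<lambda>x. (s * f x + (1 - s) * f0 x - f0 x)^2) = (\<lambda>x. s^2 * (f x - f0 x)^2)"
    by (rule ext) (simp add: algebra_simps power2_eq_square)
  then show ?thesis unfolding L2dist_def by (simp add: real_sqrt_mult)
qed

lemma L2dist_sq_le:
  assumes "integrable \<mu> (\<lambda>x. (f x - g x)^2)" "integrable \<mu> (\<lambda>x. (f x - h x)^2)"
    "integrable \<mu> (\<lambda>x. (g x - h x)^2)"
  shows "(L2dist \<mu> f g)^2 \<le> 2 * (L2dist \<mu> f h)^2 + 2 * (L2dist \<mu> g h)^2"
proof -
  have "(\<integral>x. (f x - g x)^2 \<partial>\<mu>) \<le> (\<integral>x. 2 * (f x - h x)^2 + 2 * (g x - h x)^2 \<partial>\<mu>)"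
  proof (rule integral_mono)
    fix x
    have "0 \<le> ((f x - h x) + (g x - h x))^2" by simp
    then show "(f x - g x)^2 \<le> 2 * (f x - h x)^2 + 2 * (g x - h x)^2"
      by (simp add: power2_eq_square algebra_simps)
  qed (use assms in auto)
  also have "\<dots> = 2 * (\<integral>x. (f x - h x)^2 \<partial>\<mu>) + 2 * (\<integral>x. (g x - h x)^2 \<partial>\<mu>)"
    using assms by simp
  finally show ?thesis unfolding L2dist_def by (simp add: integral_nonneg_AE)
qed

lemma dens_class_sq_diff:
  assumes "prob_space \<mu>" "space \<mu> = B" "f \<in> dens_class B \<mu> \<alpha> \<beta>" "g \<in> dens_class B \<mu> \<alpha> \<beta>"
  shows "integrable \<mu> (\<lambda>x. (f x - g x)^2)" and "(\<integral>x. (f x - g x)^2 \<partial>\<mu>) \<le> (\<beta> - \<alpha>)^2"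
proof -
  interpret prob_space \<mu> by fact
  have meas: "f \<in> borel_measurable \<mu>" "g \<in> borel_measurable \<mu>"
    using assms(3,4) by (auto simp: dens_class_def)
  have bound: "(f x - g x)^2 \<le> (\<beta> - \<alpha>)^2" if "x \<in> space \<mu>" for x
  proof -
    have "\<alpha> \<le> f x" "f x \<le> \<beta>" "\<alpha> \<le> g x" "g x \<le> \<beta>"
      using that assms(2-4) by (auto simp: dens_class_def)
    then have "\<bar>f x - g x\<bar> \<le> \<bar>\<beta> - \<alpha>\<bar>" by linarith
    then show ?thesis by (simp add: abs_le_square_iff)
  qed
  show int: "integrable \<mu> (\<lambda>x. (f x - g x)^2)"
    by (rule integrable_const_bound[where B = "(\<beta> - \<alpha>)^2"]) (use bound meas in auto)
  have "(\<integral>x. (f x - g x)^2 \<partial>\<mu>) \<le> (\<integral>x. (\<beta> - \<alpha>)^2 \<partial>\<mu>)"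
    by (rule integral_mono[OF int]) (use bound in auto)
  then show "(\<integral>x. (f x - g x)^2 \<partial>\<mu>) \<le> (\<beta> - \<alpha>)^2" by (simp add: prob_space)
qed

lemma L2dist_dens_class_le:
  assumes "prob_space \<mu>" "space \<mu> = B" "f \<in> dens_class B \<mu> \<alpha> \<beta>" "g \<in> dens_class B \<mu> \<alpha> \<beta>"
    "\<alpha> \<le> \<beta>"
  shows "L2dist \<mu> f g \<le> \<beta> - \<alpha>"
proof -
  have "L2dist \<mu> f g \<le> sqrt ((\<beta> - \<alpha>)^2)"
    unfolding L2dist_def using dens_class_sq_diff(2)[OF assms(1-4)] by (rule real_sqrt_le_mono)
  then show ?thesis using assms(5) by simp
qed

lemma L2dist_le_L2diam:
  assumes "bdd_above {L2dist \<mu> f g | f g. f \<in> F \<and> g \<in> F}" "f \<in> F" "g \<in> F"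
  shows "L2dist \<mu> f g \<le> L2diam \<mu> F"
  unfolding L2diam_def using assms by (auto intro!: cSup_upper)

lemma exists_far_from_point:
  assumes "prob_space \<mu>" "space \<mu> = B" "\<alpha> \<le> \<beta>" "F \<subseteq> dens_class B \<mu> \<alpha> \<beta>"
    "f0 \<in> F" "0 < L2diam \<mu> F"
  obtains h where "h \<in> F" "L2diam \<mu> F / 4 < L2dist \<mu> h f0"
proof -
  let ?d = "L2diam \<mu> F"
  have bdd: "bdd_above {L2dist \<mu> f g | f g. f \<in> F \<and> g \<in> F}"
    using L2dist_dens_class_le[OF assms(1,2) _ _ assms(3)] assms(4)
    by (auto simp: bdd_above_def)
  have "\<exists>x\<in>{L2dist \<mu> f g | f g. f \<in> F \<and> g \<in> F}. ?d / 2 < x"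
    using assms(5,6) less_cSup_iff[OF _ bdd, of "?d / 2"] unfolding L2diam_def by auto
  then obtain f g where fg: "f \<in> F" "g \<in> F" "?d / 2 < L2dist \<mu> f g" by blast
  have sq: "(L2dist \<mu> f g)^2 \<le> 2 * (L2dist \<mu> f f0)^2 + 2 * (L2dist \<mu> g f0)^2"
    using fg(1,2) assms(4,5) by (intro L2dist_sq_le dens_class_sq_diff(1)[OF assms(1,2)]) auto
  have "\<not> (L2dist \<mu> f f0 \<le> ?d / 4 \<and> L2dist \<mu> g f0 \<le> ?d / 4)"
  proof
    assume near: "L2dist \<mu> f f0 \<le> ?d / 4 \<and> L2dist \<mu> g f0 \<le> ?d / 4"
    have "(L2dist \<mu> f f0)^2 \<le> (?d / 4)^2"
      using near by (intro power_mono) (auto simp: L2dist_nonneg)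
    moreover have "(L2dist \<mu> g f0)^2 \<le> (?d / 4)^2"
      using near by (intro power_mono) (auto simp: L2dist_nonneg)
    moreover have "(?d / 2)^2 < (L2dist \<mu> f g)^2"
      using fg(3) assms(6) by (intro power_strict_mono) auto
    ultimately show False using sq by (simp add: power2_eq_square)
  qed
  then show ?thesis using that fg(1,2) by (auto simp: not_le)
qed

lemma packing_number_le_one:
  assumes "\<And>f g. f \<in> S \<Longrightarrow> g \<in> S \<Longrightarrow> L2dist \<mu> f g \<le> \<eta>"
  shows "packing_number \<mu> \<eta> S \<le> 1"
  unfolding packing_number_def
proof (rule Sup_least, clarify)
  fix P assume P: "finite P" "P \<subseteq> S" "\<forall>f\<in>P. \<forall>g\<in>P. f \<noteq> g \<longrightarrow> \<eta> < L2dist \<mu> f g"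
  have "f = g" if "f \<in> P" "g \<in> P" for f g
  proof (rule ccontr)
    assume "f \<noteq> g"
    then have "\<eta> < L2dist \<mu> f g" using P(3) that by blast
    moreover have "L2dist \<mu> f g \<le> \<eta>" using assms P(2) that by blast
    ultimately show False by simp
  qed
  then have "card P \<le> 1" using card_le_Suc0_iff_eq[OF P(1)] by simp
  then show "ereal (real (card P)) \<le> 1" by simp
qed

lemma packing_number_ge_two:
  assumes "f \<in> S" "g \<in> S" "f \<noteq> g" "\<eta> < L2dist \<mu> f g"
  shows "2 \<le> packing_number \<mu> \<eta> S"
proof -
  have "\<forall>a\<in>{f, g}. \<forall>b\<in>{f, g}. a \<noteq> b \<longrightarrow> \<eta> < L2dist \<mu> a b"
    using assms(4) L2dist_commute[of \<mu> f g] by auto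
  then have "ereal (real (card {f, g})) \<le> packing_number \<mu> \<eta> S"
    unfolding packing_number_def using assms(1,2) by (intro Sup_upper) blast
  then show ?thesis using assms(3) by simp
qed

lemma ln_ereal_le_zero: "x \<le> 1 \<Longrightarrow> ln_ereal x \<le> 0"
  unfolding ln_ereal_def by (cases x) auto

lemma ln_ereal_ge_ln: "0 < a \<Longrightarrow> ereal a \<le> x \<Longrightarrow> ereal (ln a) \<le> ln_ereal x"
  unfolding ln_ereal_def by (cases x) auto

text \<open>Admissible radii are bounded by \<open>c\<close> times the diameter bound: beyond it every
  local packing is a single point, so \<open>ln\<close> of it is \<open>\<le> 0\<close>.\<close>

lemma le_tau_star:
  assumes "\<And>f g. f \<in> F \<Longrightarrow> g \<in> F \<Longrightarrow> L2dist \<mu> f g \<le> D" "0 \<le> D" "0 < c" "1 \<le> N"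
    and "0 \<le> \<tau>" "ereal (real N * \<tau>^2) \<le> ln_ereal (loc_packing \<mu> F \<tau> c)"
  shows "\<tau> \<le> tau_star \<mu> F N c"
proof -
  have "\<sigma> \<le> c * D" if "0 \<le> \<sigma>" "ereal (real N * \<sigma>^2) \<le> ln_ereal (loc_packing \<mu> F \<sigma> c)" for \<sigma>
  proof (rule ccontr)
    assume "\<not> \<sigma> \<le> c * D"
    then have "D < \<sigma> / c" using assms(3) by (simp add: field_simps)
    then have "loc_packing \<mu> F \<sigma> c \<le> 1"
      unfolding loc_packing_def using assms(1)
      by (intro SUP_least packing_number_le_one) (meson IntD1 less_imp_le order.trans)
    then have "real N * \<sigma>^2 \<le> 0"
      using that(2) ln_ereal_le_zero by (metis order.trans zero_ereal_def ereal_less_eq(3))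
    then have "\<sigma> = 0" using assms(4) by (simp add: mult_le_0_iff)
    with \<open>\<not> \<sigma> \<le> c * D\<close> show False using assms(2,3) by simp
  qed
  then have "bdd_above {\<sigma>. 0 \<le> \<sigma> \<and> ereal (real N * \<sigma>^2) \<le> ln_ereal (loc_packing \<mu> F \<sigma> c)}"
    by (auto simp: bdd_above_def)
  then show ?thesis unfolding tau_star_def using assms(5,6) by (auto intro: cSup_upper)
qed

lemma loc_packing_ge_two:
  assumes center: "f0 \<in> F" "\<And>f t. f \<in> F \<Longrightarrow> 0 \<le> t \<Longrightarrow> t \<le> 1 \<Longrightarrow>
      (\<lambda>x. t * f x + (1 - t) * f0 x) \<in> F"
    and "h \<in> F" "0 < \<tau>" "\<tau> \<le> L2dist \<mu> h f0" "1 < c"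
  shows "2 \<le> loc_packing \<mu> F \<tau> c"
proof -
  define s where "s = \<tau> / L2dist \<mu> h f0"
  define g where "g = (\<lambda>x. s * h x + (1 - s) * f0 x)"
  have s: "0 \<le> s" "s \<le> 1" using assms(4,5) by (auto simp: s_def)
  have "g \<in> F" unfolding g_def using center(2)[OF assms(3) s] .
  moreover have "L2dist \<mu> g f0 = \<tau>"
    unfolding g_def L2dist_segment using assms(4,5) by (simp add: s_def)
  ultimately have "2 \<le> packing_number \<mu> (\<tau> / c) (F \<inter> L2ball \<mu> f0 \<tau>)"
    using center(1) assms(4,6)
    by (intro packing_number_ge_two[of g _ f0]) (auto simp: L2ball_def L2dist_commute field_simps)
  also have "\<dots> \<le> loc_packing \<mu> F \<tau> c"
    unfolding loc_packing_def using center(1) by (rule SUP_upper)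
  finally show ?thesis .
qed

lemma power2_min_sqrt:
  fixes a r :: real
  assumes "0 \<le> a" "0 \<le> r"
  shows "(min (sqrt a) r)^2 = min a (r^2)"
proof (cases "sqrt a \<le> r")
  case True
  then show ?thesis using sqrt_le_D[OF True] assms(1) by simp
next
  case False
  then have "r^2 < (sqrt a)^2" using assms(2) by (intro power_strict_mono) auto
  then show ?thesis using False assms(1) by simp
qed

lemma tau_star_sq_ge:
  assumes "prob_space \<mu>" "space \<mu> = B" "\<alpha> \<le> \<beta>" "F \<subseteq> dens_class B \<mu> \<alpha> \<beta>"
    "star_shaped_fun F" "1 < c" "1 \<le> N"
  shows "min (ln 2 / real N) ((L2diam \<mu> F)^2 / 16) \<le> (tau_star \<mu> F N c)^2"
proof -
  let ?d = "L2diam \<mu> F" and ?t = "tau_star \<mu> F N c"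
  obtain f0 where center: "f0 \<in> F" "\<And>f t. f \<in> F \<Longrightarrow> 0 \<le> t \<Longrightarrow> t \<le> 1 \<Longrightarrow>
      (\<lambda>x. t * f x + (1 - t) * f0 x) \<in> F"
    using assms(5) unfolding star_shaped_fun_def by blast
  have diam_bound: "L2dist \<mu> f g \<le> \<beta> - \<alpha>" if "f \<in> F" "g \<in> F" for f g
    using that assms(4) by (intro L2dist_dens_class_le[OF assms(1,2) _ _ assms(3)]) auto
  then have "0 \<le> ?d"
    using L2dist_le_L2diam[of \<mu> F f0 f0] center(1) by (force simp: bdd_above_def)
  show ?thesis
  proof (cases "?d = 0")
    case False
    then obtain h where h: "h \<in> F" "?d / 4 < L2dist \<mu> h f0"
      using exists_far_from_point[OF assms(1-4) center(1)] \<open>0 \<le> ?d\<close> by force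
    define r where "r = L2dist \<mu> h f0"
    define \<tau> where "\<tau> = min (sqrt (ln 2 / real N)) r"
    have "0 < r" using h(2) \<open>0 \<le> ?d\<close> by (simp add: r_def)
    then have "0 < \<tau>" using assms(7) by (simp add: \<tau>_def)
    have "ereal (ln 2) \<le> ln_ereal (loc_packing \<mu> F \<tau> c)"
      using loc_packing_ge_two[OF center h(1) \<open>0 < \<tau>\<close> _ assms(6)]
      by (intro ln_ereal_ge_ln) (auto simp: \<tau>_def r_def)
    moreover have "\<tau>^2 = min (ln 2 / real N) (r^2)"
      unfolding \<tau>_def using \<open>0 < r\<close> by (intro power2_min_sqrt) auto
    then have "\<tau>^2 \<le> ln 2 / real N" by simp
    then have "real N * \<tau>^2 \<le> ln 2" using assms(7) by (simp add: field_simps)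
    ultimately have "ereal (real N * \<tau>^2) \<le> ln_ereal (loc_packing \<mu> F \<tau> c)"
      by (metis ereal_less_eq(3) order.trans)
    then have "\<tau> \<le> ?t"
      using \<open>0 < \<tau>\<close> assms(3,6,7) diam_bound by (intro le_tau_star[of F \<mu> "\<beta> - \<alpha>"]) auto
    then have "\<tau>^2 \<le> ?t^2" using \<open>0 < \<tau>\<close> by (intro power_mono) auto
    moreover have "(?d / 4)^2 \<le> r^2" using h(2) \<open>0 \<le> ?d\<close> by (intro power_mono) (auto simp: r_def)
    ultimately show ?thesis
      using \<open>\<tau>^2 = min (ln 2 / real N) (r^2)\<close> by (simp add: power_divide)
  qed simp
qed

lemma min_le_mult_of_min_lower_bound:
  fixes a e d m K :: real
  assumes "0 < a" "0 \<le> K" "e < K * a" "min a (d / 16) \<le> m" "0 \<le> m"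
  shows "min e d \<le> (K + 16) * m"
proof (cases "a \<le> d / 16")
  case True
  then have "min e d \<le> K * m" using assms mult_left_mono[of a m K] by linarith
  then show ?thesis using assms(5) by (simp add: algebra_simps)
next
  case False
  then have "d \<le> 16 * m" using assms(4) by simp
  moreover have "0 \<le> K * m" using assms(2,5) by simp
  ultimately show ?thesis by (simp add: algebra_simps)
qed

lemma max_le_mult_and_le_mult_max:
  fixes m x C :: real
  assumes "1 \<le> C" "0 \<le> m" "x \<le> C * m"
  shows "max m x \<le> C * m \<and> m \<le> C * max m x"
proof -
  have "m \<le> C * m" using assms(1,2) mult_right_mono[of 1 C m] by simp
  moreover have "C * m \<le> C * max m x" using assms(1) by (intro mult_left_mono) auto
  ultimately show ?thesis using assms(3) by auto
qed

lemma tau_star_diam_comparable: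
  assumes "F \<subseteq> dens_class B \<mu> \<alpha> \<beta>" "prob_space \<mu>" "space \<mu> = B" "star_shaped_fun F"
    "\<alpha> \<le> \<beta>" "1 < c" "0 < k"
  shows "\<exists>C>0. \<forall>(N::nat) (\<epsilon>::real). N \<ge> 1 \<and> \<epsilon> < k / real N \<longrightarrow>
            (let d = L2diam \<mu> F; t = tau_star \<mu> F N c in
               max (min (t^2) (d^2)) (min \<epsilon> (d^2)) \<le> C * min (t^2) (d^2) \<and>
               min (t^2) (d^2) \<le> C * max (min (t^2) (d^2)) (min \<epsilon> (d^2)))"
proof (intro exI[of _ "k / ln 2 + 16"] conjI allI impI)
  show "0 < k / ln 2 + 16" using assms(7) by (simp add: add_pos_pos)
  fix N :: nat and \<epsilon> :: real
  assume N\<epsilon>: "1 \<le> N \<and> \<epsilon> < k / real N"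
  let ?d = "(L2diam \<mu> F)^2" and ?m = "min ((tau_star \<mu> F N c)^2) ((L2diam \<mu> F)^2)"
  have "min (ln 2 / real N) (?d / 16) \<le> (tau_star \<mu> F N c)^2"
    using tau_star_sq_ge[OF assms(2,3,5,1,4,6)] N\<epsilon> by simp
  moreover have "min (ln 2 / real N) (?d / 16) \<le> ?d" by (simp add: min.coboundedI2)
  ultimately have "min (ln 2 / real N) (?d / 16) \<le> ?m" by simp
  then have "min \<epsilon> ?d \<le> (k / ln 2 + 16) * ?m"
    using assms(7) N\<epsilon> by (intro min_le_mult_of_min_lower_bound) auto
  then show "let d = L2diam \<mu> F; t = tau_star \<mu> F N c in
      max (min (t^2) (d^2)) (min \<epsilon> (d^2)) \<le> (k / ln 2 + 16) * min (t^2) (d^2) \<and>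
      min (t^2) (d^2) \<le> (k / ln 2 + 16) * max (min (t^2) (d^2)) (min \<epsilon> (d^2))"
    unfolding Let_def using assms(7) by (intro max_le_mult_and_le_mult_max) auto
qed

theorem mainTheorem5:
  shows "\<exists>c0>0. \<forall>c\<ge>c0. \<forall>(B :: 'a::euclidean_space set) (\<mu> :: 'a measure) (\<alpha>::real) (\<beta>::real)
           (F :: ('a \<Rightarrow> real) set) (k::real).
     compact B \<and> B \<in> sets borel \<and> emeasure lborel B > 0 \<and>
     prob_space \<mu> \<and> space \<mu> = B \<and> sets \<mu> = sets (restrict_space borel B) \<and>
     0 < \<alpha> \<and> \<alpha> < \<beta> \<and> F \<subseteq> dens_class B \<mu> \<alpha> \<beta> \<and> star_shaped_fun F \<and> k > 7
     \<longrightarrow> (\<exists>C>0. \<forall>(N::nat) (\<epsilon>::real). N \<ge> 1 \<and> \<epsilon> < k / real N \<longrightarrow>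
            (let d = L2diam \<mu> F; t = tau_star \<mu> F N c in
               max (min (t^2) (d^2)) (min \<epsilon> (d^2)) \<le> C * min (t^2) (d^2) \<and>
               min (t^2) (d^2) \<le> C * max (min (t^2) (d^2)) (min \<epsilon> (d^2))))"
  by (rule exI[of _ 2], intro conjI allI impI, simp, elim conjE,
      rule tau_star_diam_comparable, assumption+) auto

end
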